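(* Let $q^*$ be the unique positive solution of the equation $q\log 2=2^{q-1}-1$, and let $0<q<q^*$. For $p>q$ let $V(x)=\frac{|x|^p}{p}-\frac{|x|^q}{q}$ on ${\mathbb R}$ and $E(\rho)=\frac12\iint V(x-y)\,d\rho(x)\,d\rho(y)$ for $\rho\in\mathcal P({\mathbb R})$. Then there exists $p_*=p_*(q)>q$ such that for all $p\in(q,p_* )$ and all $1\le\lambda<\infty$, the measure $\rho^*=\frac12\delta_0+\frac12\delta_1$ is not a $d_\lambda$-local minimizer of $E$.
   Context: $\mathcal P_\lambda({\mathbb R})$ is the set of Borel probability measures on ${\mathbb R}$ with finite moment of order $\lambda$, and $d_\lambda(\mu,\nu)=\big[\inf_{\pi\in\Pi(\mu,\nu)}\iint|x-y|^\lambda d\pi(x,y)\big]^{1/\lambda}$ is the $\lambda$-Wasserstein distance, $\Pi(\mu,\nu)$ being the set of couplings. A measure $\rho\in\mathcal P_\lambda({\mathbb R})$ is a $d_\lambda$-local minimizer of $E$ if there is $\eta>0$ such that $E(\rho)\le E(\rho')$ for all $\rho'\in\mathcal P_\lambda({\mathbb R})$ with $d_\lambda(\rho,\rho')\le\eta$. *)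

theory Defs
  imports "HOL-Probability.Probability"
begin

definition P_lam :: "real \<Rightarrow> real measure set" where
  "P_lam lam = {\<mu>. prob_space \<mu> \<and> sets \<mu> = sets (borel :: real measure) \<and>
                   integrable \<mu> (\<lambda>x. \<bar>x\<bar> powr lam)}"

definition couplings :: "real measure \<Rightarrow> real measure \<Rightarrow> (real \<times> real) measure set" where
  "couplings \<mu> \<nu> = {\<pi>. prob_space \<pi> \<and> sets \<pi> = sets (borel \<Otimes>\<^sub>M borel :: (real \<times> real) measure) \<and>
                       distr \<pi> borel fst = \<mu> \<and> distr \<pi> borel snd = \<nu>}"

definition wasserstein :: "real \<Rightarrow> real measure \<Rightarrow> real measure \<Rightarrow> real" where
  "wasserstein lam \<mu> \<nu> =
     (enn2real (INF \<pi>\<in>couplings \<mu> \<nu>. \<integral>\<^sup>+ z. ennreal (\<bar>fst z - snd z\<bar> powr lam) \<partial>\<pi>)) powr (1 / lam)"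

definition V_pot :: "real \<Rightarrow> real \<Rightarrow> real \<Rightarrow> real" where
  "V_pot p q x = \<bar>x\<bar> powr p / p - \<bar>x\<bar> powr q / q"

text \<open>Interaction energy E(rho) = 1/2 iint V(x-y) drho drho, extended-real valued:
  V is bounded below, so when V(x-y) is not integrable the energy is +infinity.\<close>
definition energy :: "real \<Rightarrow> real \<Rightarrow> real measure \<Rightarrow> ereal" where
  "energy p q \<rho> =
     (if integrable (\<rho> \<Otimes>\<^sub>M \<rho>) (\<lambda>z. V_pot p q (fst z - snd z))
      then ereal ((1/2) * (\<integral> z. V_pot p q (fst z - snd z) \<partial>(\<rho> \<Otimes>\<^sub>M \<rho>)))
      else \<infinity>)"

definition local_minimizer :: "real \<Rightarrow> (real measure \<Rightarrow> ereal) \<Rightarrow> real measure \<Rightarrow> bool" where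
  "local_minimizer lam E \<rho> \<longleftrightarrow> \<rho> \<in> P_lam lam \<and>
     (\<exists>\<eta>>0. \<forall>\<rho>'\<in>P_lam lam. wasserstein lam \<rho> \<rho>' \<le> \<eta> \<longrightarrow> E \<rho> \<le> E \<rho>')"

definition rho_star :: "real measure" where
  "rho_star = distr (measure_pmf (pmf_of_set {0::real, 1})) borel id"

end

theory Submission
  imports Defs
begin

text \<open>Split off mass t/2 from each atom of rho* and put the mass t at the midpoint 1/2.
  Transporting only the split mass over distance 1/2 costs d_lam(rho*, rho_t)^lam <= t, while
  E(rho_t) - E(rho*) = -t (V(1) - 2 V(1/2)) / 2 + O(t^2). Hence rho* is not a local minimiser,
  for any lam, as soon as V(1) > 2 V(1/2). Writing V(1) - 2 V(1/2) = g(p) - g(q) with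
  g(p) = (1 - 2^(1-p)) / p, this holds for p slightly above q whenever g'(q) > 0, that is
  2^(q-1) < 1 + q log 2; by convexity of x \<mapsto> 2^(x-1) - 1 - x log 2, which is negative at 0
  and vanishes at q*, this is the case on (0, q*).\<close>

definition borel_of_pmf :: "'a::topological_space pmf \<Rightarrow> 'a measure" where
  "borel_of_pmf M = distr (measure_pmf M) borel id"

lemma sets_borel_of_pmf [simp, measurable_cong]: "sets (borel_of_pmf M) = sets borel"
  by (simp add: borel_of_pmf_def)

lemma prob_space_borel_of_pmf: "prob_space (borel_of_pmf M)"
  unfolding borel_of_pmf_def by (rule measure_pmf.prob_space_distr) simp

lemma nn_integral_borel_of_pmf:
  fixes g :: "'a::topological_space \<Rightarrow> ennreal"
  assumes "finite A" "set_pmf M \<subseteq> A" "g \<in> borel_measurable borel"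
  shows "(\<integral>\<^sup>+x. g x \<partial>borel_of_pmf M) = (\<Sum>x\<in>A. g x * pmf M x)"
  unfolding borel_of_pmf_def using assms
  by (subst nn_integral_distr) (auto intro!: nn_integral_measure_pmf_support simp: set_pmf_eq)

lemma integral_borel_of_pmf:
  fixes g :: "'a::topological_space \<Rightarrow> real"
  assumes "finite A" "set_pmf M \<subseteq> A" "g \<in> borel_measurable borel"
  shows "(\<integral>x. g x \<partial>borel_of_pmf M) = (\<Sum>x\<in>A. pmf M x * g x)"
proof -
  have "(\<integral>x. g x \<partial>borel_of_pmf M) = (\<integral>x. g x \<partial>measure_pmf M)"
    unfolding borel_of_pmf_def using assms(3) by (subst integral_distr) auto
  also have "\<dots> = (\<Sum>x\<in>A. pmf M x * g x)"
    using assms(2) by (subst integral_measure_pmf[OF assms(1)]) auto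
  finally show ?thesis .
qed

lemma
  fixes f :: "'a::topological_space \<Rightarrow> 'a \<Rightarrow> real"
  assumes A: "finite A" "set_pmf M \<subseteq> A"
    and f[measurable]: "case_prod f \<in> borel_measurable (borel \<Otimes>\<^sub>M borel)"
  shows integrable_pair_borel_of_pmf: "integrable (borel_of_pmf M \<Otimes>\<^sub>M borel_of_pmf M) (case_prod f)"
    and integral_pair_borel_of_pmf:
      "(\<integral>z. case_prod f z \<partial>(borel_of_pmf M \<Otimes>\<^sub>M borel_of_pmf M)) =
         (\<Sum>x\<in>A. \<Sum>y\<in>A. pmf M x * pmf M y * f x y)"
proof -
  let ?\<rho> = "borel_of_pmf M"
  interpret pair_prob_space ?\<rho> ?\<rho>
    by (simp add: pair_prob_space_def pair_sigma_finite_def prob_space_borel_of_pmf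
        prob_space_imp_sigma_finite)
  have [measurable]: "(\<lambda>y. f x y) \<in> borel_measurable borel" for x
    by measurable
  have [measurable]: "(\<lambda>x. f x y) \<in> borel_measurable borel" for y
    by measurable
  have "(\<integral>\<^sup>+z. ennreal (norm (case_prod f z)) \<partial>(?\<rho> \<Otimes>\<^sub>M ?\<rho>)) =
      (\<integral>\<^sup>+x. \<integral>\<^sup>+y. ennreal (norm (f x y)) \<partial>?\<rho> \<partial>?\<rho>)"
    by (subst M1.nn_integral_fst[symmetric]) auto
  also have "\<dots> = (\<Sum>x\<in>A. (\<Sum>y\<in>A. ennreal (norm (f x y)) * pmf M y) * pmf M x)"
    using A by (simp add: nn_integral_borel_of_pmf)
  also have "\<dots> < \<infinity>"
    using A(1) by (simp add: ennreal_mult_less_top top.not_eq_extremum ennreal_mult_eq_top_iff)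
  finally show int: "integrable (?\<rho> \<Otimes>\<^sub>M ?\<rho>) (case_prod f)"
    by (intro integrableI_bounded) auto
  have "(\<integral>z. case_prod f z \<partial>(?\<rho> \<Otimes>\<^sub>M ?\<rho>)) = (\<integral>x. \<integral>y. f x y \<partial>?\<rho> \<partial>?\<rho>)"
    using integral_fst[OF int] by simp
  also have "\<dots> = (\<Sum>x\<in>A. pmf M x * (\<Sum>y\<in>A. pmf M y * f x y))"
    using A by (simp add: integral_borel_of_pmf)
  finally show "(\<integral>z. case_prod f z \<partial>(?\<rho> \<Otimes>\<^sub>M ?\<rho>)) = (\<Sum>x\<in>A. \<Sum>y\<in>A. pmf M x * pmf M y * f x y)"
    by (simp add: sum_distrib_left mult.assoc)
qed

lemma borel_of_pmf_in_P_lam: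
  fixes M :: "real pmf"
  assumes "finite (set_pmf M)"
  shows "borel_of_pmf M \<in> P_lam lam"
proof -
  have "integrable (measure_pmf M) (\<lambda>x. \<bar>x\<bar> powr lam)"
    using assms by (rule integrable_measure_pmf_finite)
  then have "integrable (borel_of_pmf M) (\<lambda>x. \<bar>x\<bar> powr lam)"
    unfolding borel_of_pmf_def by (subst integrable_distr_eq) auto
  then show ?thesis
    unfolding P_lam_def by (simp add: prob_space_borel_of_pmf)
qed

lemma borel_measurable_V_pot [measurable]: "V_pot p q \<in> borel_measurable borel"
  unfolding V_pot_def by measurable

lemma energy_borel_of_pmf:
  assumes "finite A" "set_pmf M \<subseteq> A"
  shows "energy p q (borel_of_pmf M) =
    ereal (1/2 * (\<Sum>x\<in>A. \<Sum>y\<in>A. pmf M x * pmf M y * V_pot p q (x - y)))"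
proof -
  have V: "(\<lambda>z. V_pot p q (fst z - snd z)) = (\<lambda>(x, y). V_pot p q (x - y))"
    by auto
  have "(\<lambda>(x, y). V_pot p q (x - y)) \<in> borel_measurable (borel \<Otimes>\<^sub>M borel)"
    by measurable
  note integrable = integrable_pair_borel_of_pmf[OF assms this]
    and integral = integral_pair_borel_of_pmf[OF assms this]
  show ?thesis
    unfolding energy_def V by (simp only: if_P[OF integrable] integral)
qed

lemma wasserstein_le_coupling_cost:
  assumes "\<pi> \<in> couplings \<mu> \<nu>" "0 \<le> c" "0 < lam"
    and "(\<integral>\<^sup>+z. ennreal (\<bar>fst z - snd z\<bar> powr lam) \<partial>\<pi>) \<le> ennreal c"
  shows "wasserstein lam \<mu> \<nu> \<le> c powr (1 / lam)"
proof -
  have "(INF \<pi>\<in>couplings \<mu> \<nu>. \<integral>\<^sup>+z. ennreal (\<bar>fst z - snd z\<bar> powr lam) \<partial>\<pi>) \<le> ennreal c"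
    using assms(1,4) by (blast intro: INF_lower2)
  then have "enn2real (INF \<pi>\<in>couplings \<mu> \<nu>. \<integral>\<^sup>+z. ennreal (\<bar>fst z - snd z\<bar> powr lam) \<partial>\<pi>) \<le> c"
    using assms(2) enn2real_mono by fastforce
  then show ?thesis
    unfolding wasserstein_def using assms(3) by (intro powr_mono2) auto
qed

lemma distr_borel_map_pmf:
  fixes f :: "'a \<Rightarrow> 'b::topological_space"
  shows "distr (measure_pmf C) borel f = borel_of_pmf (map_pmf f C)"
  unfolding borel_of_pmf_def map_pmf_rep_eq by (subst distr_distr) (auto simp: comp_def)

lemma coupling_of_pmf:
  fixes C :: "(real \<times> real) pmf"
  shows "distr (measure_pmf C) (borel \<Otimes>\<^sub>M borel) id
    \<in> couplings (borel_of_pmf (map_pmf fst C)) (borel_of_pmf (map_pmf snd C))"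
proof -
  let ?\<pi> = "distr (measure_pmf C) (borel \<Otimes>\<^sub>M borel) id"
  have "distr ?\<pi> borel g = borel_of_pmf (map_pmf g C)"
    if "g \<in> borel_measurable (borel \<Otimes>\<^sub>M borel)" for g :: "real \<times> real \<Rightarrow> real"
    using that by (subst distr_distr) (auto simp: comp_def space_pair_measure distr_borel_map_pmf)
  moreover have "prob_space ?\<pi>"
    by (rule measure_pmf.prob_space_distr) (simp add: space_pair_measure)
  ultimately show ?thesis
    unfolding couplings_def by simp
qed

definition midpoint_split :: "real \<Rightarrow> real pmf" where
  "midpoint_split t = pmf_of_list [(0, (1 - t) / 2), (1, (1 - t) / 2), (1/2, t)]"

definition midpoint_transport :: "real \<Rightarrow> (real \<times> real) pmf" where
  "midpoint_transport t =
     pmf_of_list [((0, 0), (1 - t) / 2), ((1, 1), (1 - t) / 2), ((0, 1/2), t / 2), ((1, 1/2), t / 2)]"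

context
  fixes t :: real
  assumes t: "0 \<le> t" "t \<le> 1"
begin

lemma pmf_midpoint_split:
  "pmf (midpoint_split t) x = (if x = 0 \<or> x = 1 then (1 - t) / 2 else if x = 1/2 then t else 0)"
  unfolding midpoint_split_def using t by (subst pmf_pmf_of_list) (auto simp: pmf_of_list_wf_def)

lemma set_pmf_midpoint_split: "set_pmf (midpoint_split t) \<subseteq> {0, 1, 1/2}"
  by (auto simp: set_pmf_eq pmf_midpoint_split)

lemma measure_midpoint_transport:
  "measure_pmf.prob (midpoint_transport t) A =
     sum_list (map snd (filter (\<lambda>z. fst z \<in> A)
       [((0, 0), (1 - t) / 2), ((1, 1), (1 - t) / 2), ((0, 1/2), t / 2), ((1, 1/2), t / 2)]))"
  unfolding midpoint_transport_def using t by (subst measure_pmf_of_list) (auto simp: pmf_of_list_wf_def)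

lemma map_fst_midpoint_transport: "map_pmf fst (midpoint_transport t) = pmf_of_set {0, 1}"
  by (rule pmf_eqI) (auto simp: pmf_map measure_midpoint_transport indicator_def field_simps)

lemma map_snd_midpoint_transport: "map_pmf snd (midpoint_transport t) = midpoint_split t"
  by (rule pmf_eqI) (auto simp: pmf_map measure_midpoint_transport pmf_midpoint_split)

lemma transport_cost_midpoint_transport:
  "(\<integral>\<^sup>+z. ennreal (\<bar>fst z - snd z\<bar> powr lam)
      \<partial>distr (measure_pmf (midpoint_transport t)) (borel \<Otimes>\<^sub>M borel) id) = ennreal (t * (1/2) powr lam)"
proof -
  let ?S = "{(0, 0), (1, 1), (0, 1/2), (1, 1/2)} :: (real \<times> real) set"
  have pmf_transport: "pmf (midpoint_transport t) z = measure_pmf.prob (midpoint_transport t) {z}" for z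
    by (simp add: measure_pmf_single)
  have "set_pmf (midpoint_transport t) \<subseteq> ?S"
    by (auto simp: set_pmf_eq pmf_transport measure_midpoint_transport split: if_splits)
  then have "(\<integral>\<^sup>+z. ennreal (\<bar>fst z - snd z\<bar> powr lam) \<partial>measure_pmf (midpoint_transport t))
      = (\<Sum>z\<in>?S. ennreal (\<bar>fst z - snd z\<bar> powr lam) * pmf (midpoint_transport t) z)"
    by (intro nn_integral_measure_pmf_support) (auto simp: set_pmf_eq)
  also have "\<dots> = ennreal (t * (1/2) powr lam)"
    using t by (simp add: pmf_transport measure_midpoint_transport ennreal_mult[symmetric] ennreal_plus[symmetric] field_simps)
  finally show ?thesis
    by (subst nn_integral_distr) (auto simp: space_pair_measure)
qed

lemma energy_midpoint_split:
  "energy p q (borel_of_pmf (midpoint_split t)) =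
     ereal (((1 - t) / 2)\<^sup>2 * V_pot p q 1 + (1 - t) * t * V_pot p q (1/2))"
proof -
  have "V_pot p q (- x) = V_pot p q x" "V_pot p q 0 = 0" for x
    by (simp_all add: V_pot_def)
  then show ?thesis
    using set_pmf_midpoint_split
    by (subst energy_borel_of_pmf[of "{0, 1, 1/2}"])
       (auto simp: pmf_midpoint_split field_simps power2_eq_square)
qed

lemma wasserstein_rho_star_midpoint_split:
  assumes "0 < lam"
  shows "wasserstein lam rho_star (borel_of_pmf (midpoint_split t)) \<le> t powr (1 / lam)"
proof -
  have "ennreal (t * (1/2) powr lam) \<le> ennreal t"
    using t assms by (intro ennreal_leI mult_left_le) (auto intro: powr_le1)
  then have "wasserstein lam (borel_of_pmf (map_pmf fst (midpoint_transport t)))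
      (borel_of_pmf (map_pmf snd (midpoint_transport t))) \<le> t powr (1 / lam)"
    using t assms
    by (intro wasserstein_le_coupling_cost[OF coupling_of_pmf]) (simp_all add: transport_cost_midpoint_transport)
  then show ?thesis
    by (simp add: map_fst_midpoint_transport map_snd_midpoint_transport rho_star_def borel_of_pmf_def)
qed

end

lemma energy_rho_star: "energy p q rho_star = ereal (V_pot p q 1 / 4)"
proof -
  have "V_pot p q (- 1) = V_pot p q 1" "V_pot p q 0 = 0"
    by (simp_all add: V_pot_def)
  then show ?thesis
    unfolding rho_star_def borel_of_pmf_def[symmetric]
    by (subst energy_borel_of_pmf[of "{0, 1}"]) auto
qed

lemma exists_small_split_energy_less:
  fixes a b e :: real
  assumes "2 * b < a" "0 < e"
  shows "\<exists>t>0. t \<le> e \<and> t \<le> 1 \<and> ((1 - t) / 2)\<^sup>2 * a + (1 - t) * t * b < a / 4"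
proof -
  define D where "D = a - 2 * b"
  define t where "t = min (1/2) (min e (D / (2 * (\<bar>a\<bar> + 1))))"
  have D: "0 < D" using assms(1) by (simp add: D_def)
  have t: "0 < t" "t \<le> 1/2" "t \<le> e" "t \<le> D / (2 * (\<bar>a\<bar> + 1))"
    using D assms(2) unfolding t_def by (simp, (meson min.cobounded1 min.cobounded2 order_trans)+)
  have "t * (- a) \<le> t * (\<bar>a\<bar> + 1)"
    using t(1) by (intro mult_left_mono) auto
  also have "\<dots> \<le> D / 2"
    using t(4) by (subst (asm) pos_le_divide_eq) (auto simp: algebra_simps)
  finally have "t * (- a) / 4 < 1/2 * D / 2"
    using D by simp
  also have "\<dots> \<le> (1 - t) * D / 2"
    using t(2) D by (intro divide_right_mono mult_right_mono) auto
  finally have "t * (- a) / 4 < (1 - t) * D / 2" .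
  then have "t * (t * (- a) / 4 - (1 - t) * D / 2) < 0"
    using t(1) by (simp add: mult_pos_neg)
  moreover have "((1 - t) / 2)\<^sup>2 * a + (1 - t) * t * b - a / 4 = t * (t * (- a) / 4 - (1 - t) * D / 2)"
    by (simp add: D_def field_simps power2_eq_square)
  ultimately show ?thesis
    using t by (intro exI[of _ t]) auto
qed

lemma not_local_minimizer_rho_star:
  assumes "2 * V_pot p q (1/2) < V_pot p q 1" "0 < lam"
  shows "\<not> local_minimizer lam (energy p q) rho_star"
proof
  assume "local_minimizer lam (energy p q) rho_star"
  then obtain \<eta> where "0 < \<eta>" and minimal: "\<And>\<rho>. \<rho> \<in> P_lam lam \<Longrightarrow>
      wasserstein lam rho_star \<rho> \<le> \<eta> \<Longrightarrow> energy p q rho_star \<le> energy p q \<rho>"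
    unfolding local_minimizer_def by blast
  have "0 < \<eta> powr lam"
    using \<open>0 < \<eta>\<close> by simp
  then obtain t where t: "0 < t" "t \<le> \<eta> powr lam" "t \<le> 1"
    and less: "((1 - t) / 2)\<^sup>2 * V_pot p q 1 + (1 - t) * t * V_pot p q (1/2) < V_pot p q 1 / 4"
    using exists_small_split_energy_less[OF assms(1)] by blast
  let ?\<rho> = "borel_of_pmf (midpoint_split t)"
  have "wasserstein lam rho_star ?\<rho> \<le> t powr (1 / lam)"
    using t assms(2) by (intro wasserstein_rho_star_midpoint_split) auto
  also have "\<dots> \<le> (\<eta> powr lam) powr (1 / lam)"
    using t assms(2) by (intro powr_mono2) auto
  also have "\<dots> = \<eta>"
    using \<open>0 < \<eta>\<close> assms(2) by (simp add: powr_powr)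
  finally have "energy p q rho_star \<le> energy p q ?\<rho>"
    using t set_pmf_midpoint_split[of t]
    by (intro minimal borel_of_pmf_in_P_lam) (auto intro: finite_subset)
  then show False
    using t less by (simp add: energy_midpoint_split energy_rho_star)
qed

lemma two_powr_less_below_qstar:
  fixes q qstar :: real
  assumes "0 < qstar" "qstar * ln 2 = 2 powr (qstar - 1) - 1" "0 < q" "q < qstar"
  shows "2 powr (q - 1) < q * ln 2 + 1"
proof -
  define s where "s = q / qstar"
  have s: "0 < s" "s < 1"
    using assms by (auto simp: s_def)
  have "(q - 1) * ln 2 = (1 - s) * (- ln 2) + s * ((qstar - 1) * ln 2)"
    using assms(1) by (simp add: s_def field_simps)
  then have "2 powr (q - 1) \<le> (1 - s) * exp (- ln 2) + s * exp ((qstar - 1) * ln 2)"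
    using convex_onD[OF exp_convex, of s "- ln 2" "(qstar - 1) * ln 2"] s
    by (simp add: powr_def)
  also have "\<dots> = (1 - s) / 2 + s * (qstar * ln 2 + 1)"
    using assms(2) by (simp add: exp_minus powr_def)
  also have "\<dots> = q * ln 2 + (1 + s) / 2"
    using assms(1) by (simp add: s_def field_simps)
  also have "\<dots> < q * ln 2 + 1"
    using s by simp
  finally show ?thesis .
qed

lemma midpoint_gain_right_of_q:
  fixes q :: real
  assumes "0 < q" "2 powr (q - 1) < q * ln 2 + 1"
  shows "\<exists>d>0. \<forall>p. q < p \<and> p < q + d \<longrightarrow> 2 * V_pot p q (1/2) < V_pot p q 1"
proof -
  define g where "g p = (1 - 2 * (1/2) powr p) / p" for p :: real
  have gain: "V_pot p q 1 - 2 * V_pot p q (1/2) = g p - g q" for p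
    by (simp add: g_def V_pot_def diff_divide_distrib)
  have "(g has_real_derivative (2 * (1/2) powr q * (q * ln 2 + 1) - 1) / q\<^sup>2) (at q)"
  proof -
    have "(g has_real_derivative (- 2 * ((1/2) powr q * ln (1/2)) * q - (1 - 2 * (1/2) powr q)) / q\<^sup>2) (at q)"
      unfolding g_def using assms(1)
      by (auto intro!: derivative_eq_intros simp: power2_eq_square)
    then show ?thesis
      by (simp add: ln_div algebra_simps)
  qed
  moreover have "1 < 2 * (1/2) powr q * (q * ln 2 + 1)"
  proof -
    have "2 * (1/2 :: real) powr q = 1 / 2 powr (q - 1)"
      by (simp add: powr_divide powr_diff)
    then show ?thesis
      using assms(2) by simp
  qed
  ultimately obtain d where "0 < d" and inc: "\<And>h. 0 < h \<Longrightarrow> h < d \<Longrightarrow> g q < g (q + h)"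
    using DERIV_pos_inc_right[of g _ q] assms(1) by (metis diff_gt_0_iff_gt divide_pos_pos zero_less_power)
  show ?thesis
  proof (intro exI[of _ d] conjI allI impI)
    fix p
    assume "q < p \<and> p < q + d"
    then have "g q < g p"
      using inc[of "p - q"] by simp
    then show "2 * V_pot p q (1/2) < V_pot p q 1"
      using gain[of p] by simp
  qed (rule \<open>0 < d\<close>)
qed

theorem proposition2:
  fixes q qstar :: real
  assumes "qstar > 0" and "qstar * ln 2 = 2 powr (qstar - 1) - 1"
    and "0 < q" and "q < qstar"
  shows "\<exists>pstar > q. \<forall>p. q < p \<and> p < pstar \<longrightarrow>
           (\<forall>lam. 1 \<le> lam \<longrightarrow> \<not> local_minimizer lam (energy p q) rho_star)"
proof -
  obtain d where "0 < d" and gain: "\<And>p. q < p \<and> p < q + d \<Longrightarrow> 2 * V_pot p q (1/2) < V_pot p q 1"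
    using midpoint_gain_right_of_q[OF assms(3) two_powr_less_below_qstar[OF assms]] by blast
  then show ?thesis
    using gain not_local_minimizer_rho_star by (intro exI[of _ "q + d"]) auto
qed

end
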